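(* Let $0<\varepsilon<\frac12$ and $c=(1-\varepsilon)^{1/h}(b_1\cdots b_h)^{1/h^2}/\Gamma(1/h)$. Let $\mathscr{A}\subseteq\mathbb{Z}_{\ge0}$ be the random set with $0\in\mathscr{A}$ and mutually independent events $\{n\in\mathscr{A}\}$ ($n\ge1$) of probability $\min\{c(n\log n)^{1/h}/n,\,1\}$. Then \[ \sum_{n\ge1}\Pr\big(r_{\mathscr{A},h}(n)=0\big)=\infty. \]
   Context: Fix an integer $h\ge 2$ and positive integers $b_1,\dots,b_h$, not necessarily distinct, with $\gcd(b_1,\dots,b_h)=1$. For $A\subseteq\mathbb{Z}_{\ge 0}$, $1\le\ell\le h$ and an integer $n\ge 0$, let $r_{A,\ell}(n)$ be the number of $\ell$-tuples $(k_1,\dots,k_\ell)\in A^\ell$ with $b_1k_1+\cdots+b_\ell k_\ell=n$. *)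

theory Defs
  imports "HOL-Probability.Probability"
begin

definition rep :: "(nat \<Rightarrow> nat) \<Rightarrow> nat set \<Rightarrow> nat \<Rightarrow> nat \<Rightarrow> nat" where
  "rep b A l n = card {k :: nat list. length k = l \<and> set k \<subseteq> A \<and>
                        (\<Sum>i<l. b (Suc i) * k ! i) = n}"

definition rand_set :: "(nat \<Rightarrow> bool) \<Rightarrow> nat set" where
  "rand_set \<omega> = insert 0 {n. n \<ge> 1 \<and> \<omega> n}"

definition bern_space :: "(nat \<Rightarrow> real) \<Rightarrow> (nat \<Rightarrow> bool) measure" where
  "bern_space p = PiM UNIV (\<lambda>n. measure_pmf (bernoulli_pmf (p n)))"

end

theory Submission
  imports Defs "HOL-Real_Asymp.Real_Asymp"
begin

text \<open>
  Call the set of nonzero entries of a representation \<open>n = b\<^sub>1k\<^sub>1 + \<dots> + b\<^sub>hk\<^sub>h\<close> its support,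
  and let \<open>S\<^sub>n = \<Sum>\<^sub>D \<Prod>\<^sub>i\<^sub>\<in>\<^sub>D p\<^sub>i\<close> be the sum over the supports of representations of \<open>n\<close>.
  The event \<open>r(n) = 0\<close> says that the random set avoids every support. These events are
  decreasing, so Harris' inequality gives \<open>P(r(n) = 0) \<ge> \<Prod>\<^sub>D (1 - \<Prod>\<^sub>i\<^sub>\<in>\<^sub>D p\<^sub>i) \<ge> exp(-(1+\<delta>) S\<^sub>n)\<close>
  once the \<open>p\<^sub>i\<close> are small. Comparing Riemann sums with Beta integrals, the supports of full
  size contribute at most a Dirichlet integral to \<open>\<Sum>\<^sub>n\<^sub>\<le>\<^sub>N S\<^sub>n\<close>, and \<open>c\<close> is chosen so that this
  is \<open>(1 - \<epsilon>) N log N\<close>; smaller supports only contribute \<open>O((N log N)\<^bsup>1-1/h\<^esup>)\<close>.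
  Jensen's inequality then gives \<open>\<Sum>\<^sub>n\<^sub>\<le>\<^sub>N exp(-(1+\<delta>) S\<^sub>n) \<ge> N\<^bsup>1-\<theta>\<^esup>\<close> for some \<open>\<theta> < 1\<close>.
\<close>

section \<open>Harris' inequality for independent random subsets\<close>

definition bern_weight :: "('a \<Rightarrow> real) \<Rightarrow> 'a set \<Rightarrow> 'a set \<Rightarrow> real" where
  "bern_weight w U X = (\<Prod>i\<in>X. w i) * (\<Prod>i\<in>U - X. 1 - w i)"

definition bern_prob :: "('a \<Rightarrow> real) \<Rightarrow> 'a set \<Rightarrow> ('a set \<Rightarrow> bool) \<Rightarrow> real" where
  "bern_prob w U P = (\<Sum>X | X \<subseteq> U \<and> P X. bern_weight w U X)"

lemma bern_prob_empty: "bern_prob w {} P = (if P {} then 1 else 0)"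
proof -
  have "{X. X \<subseteq> {} \<and> P X} = (if P {} then {{}} else {})" by auto
  then show ?thesis by (simp add: bern_prob_def bern_weight_def)
qed

lemma bern_prob_insert:
  assumes "finite U" "a \<notin> U"
  shows "bern_prob w (insert a U) P
       = w a * bern_prob w U (\<lambda>X. P (insert a X)) + (1 - w a) * bern_prob w U P"
proof -
  let ?out = "{X. X \<subseteq> U \<and> P X}" and ?in = "{X. X \<subseteq> U \<and> P (insert a X)}"
  have split: "{X. X \<subseteq> insert a U \<and> P X} = ?out \<union> insert a ` ?in"
  proof (rule set_eqI, rule iffI)
    fix X assume X: "X \<in> {X. X \<subseteq> insert a U \<and> P X}"
    show "X \<in> ?out \<union> insert a ` ?in"
    proof (cases "a \<in> X")
      case True
      then have "X = insert a (X - {a})" by auto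
      then show ?thesis using X by (intro UnI2 image_eqI[of _ _ "X - {a}"]) auto
    qed (use X in auto)
  qed auto
  have fin: "finite ?out" "finite ?in"
    using assms by (auto intro: finite_subset[of _ "Pow U"])
  have weight_out: "bern_weight w (insert a U) X = (1 - w a) * bern_weight w U X" if "X \<subseteq> U" for X
  proof -
    have "insert a U - X = insert a (U - X)" using that assms by auto
    then show ?thesis using that assms by (simp add: bern_weight_def)
  qed
  have weight_in: "bern_weight w (insert a U) (insert a X) = w a * bern_weight w U X"
    if "X \<subseteq> U" for X
  proof -
    have "insert a U - insert a X = U - X" "a \<notin> X" "finite X"
      using that assms finite_subset by auto
    then show ?thesis by (simp add: bern_weight_def)
  qed
  have "bern_prob w (insert a U) P = (\<Sum>X\<in>?out. bern_weight w (insert a U) X)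
       + (\<Sum>X\<in>insert a ` ?in. bern_weight w (insert a U) X)"
    unfolding bern_prob_def split using fin assms by (intro sum.union_disjoint) auto
  also have "(\<Sum>X\<in>insert a ` ?in. bern_weight w (insert a U) X)
      = (\<Sum>X\<in>?in. bern_weight w (insert a U) (insert a X))"
    using assms by (subst sum.reindex) (auto simp: inj_on_def)
  also have "\<dots> = w a * bern_prob w U (\<lambda>X. P (insert a X))"
    unfolding bern_prob_def sum_distrib_left by (intro sum.cong) (auto simp: weight_in)
  also have "(\<Sum>X\<in>?out. bern_weight w (insert a U) X) = (1 - w a) * bern_prob w U P"
    unfolding bern_prob_def sum_distrib_left by (intro sum.cong) (auto simp: weight_out)
  finally show ?thesis by simp
qed

lemma bern_weight_nonneg:
  "(\<And>i. i \<in> U \<Longrightarrow> 0 \<le> w i \<and> w i \<le> 1) \<Longrightarrow> X \<subseteq> U \<Longrightarrow> 0 \<le> bern_weight w U X"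
  unfolding bern_weight_def by (intro mult_nonneg_nonneg prod_nonneg) auto

lemma bern_prob_nonneg: "(\<And>i. i \<in> U \<Longrightarrow> 0 \<le> w i \<and> w i \<le> 1) \<Longrightarrow> 0 \<le> bern_prob w U P"
  unfolding bern_prob_def by (intro sum_nonneg bern_weight_nonneg) auto

lemma bern_prob_mono:
  assumes "finite U" "\<And>i. i \<in> U \<Longrightarrow> 0 \<le> w i \<and> w i \<le> 1"
    and "\<And>X. X \<subseteq> U \<Longrightarrow> P X \<Longrightarrow> Q X"
  shows "bern_prob w U P \<le> bern_prob w U Q"
  unfolding bern_prob_def using assms
  by (intro sum_mono2) (auto intro: finite_subset[of _ "Pow U"] bern_weight_nonneg)

lemma bern_prob_True: "finite U \<Longrightarrow> bern_prob w U (\<lambda>X. True) = 1"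
  by (induction U rule: finite_induct) (auto simp: bern_prob_empty bern_prob_insert algebra_simps)

lemma bern_prob_Not:
  assumes "finite U"
  shows "bern_prob w U (\<lambda>X. \<not> P X) = 1 - bern_prob w U P"
proof -
  have "bern_prob w U (\<lambda>X. True) = bern_prob w U (\<lambda>X. \<not> P X) + bern_prob w U P"
    unfolding bern_prob_def using assms
    by (subst sum.union_disjoint[symmetric])
       (auto intro: finite_subset[of _ "Pow U"] intro!: sum.cong)
  then show ?thesis using bern_prob_True[OF assms] by simp
qed

lemma bern_prob_superset:
  "finite U \<Longrightarrow> S \<subseteq> U \<Longrightarrow> bern_prob w U (\<lambda>X. S \<subseteq> X) = (\<Prod>i\<in>S. w i)"
proof (induction U arbitrary: S rule: finite_induct)
  case empty
  then show ?case by (simp add: bern_prob_empty)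
next
  case (insert a U)
  show ?case
  proof (cases "a \<in> S")
    case True
    have "bern_prob w U (\<lambda>X. S \<subseteq> X) = 0"
      unfolding bern_prob_def using True insert by (intro sum.neutral) auto
    moreover have "(\<lambda>X. S \<subseteq> insert a X) = (\<lambda>X. S - {a} \<subseteq> X)" by auto
    ultimately have "bern_prob w (insert a U) (\<lambda>X. S \<subseteq> X) = w a * bern_prob w U (\<lambda>X. S - {a} \<subseteq> X)"
      by (simp add: bern_prob_insert[OF insert.hyps])
    also have "\<dots> = w a * (\<Prod>i\<in>S - {a}. w i)"
      using insert.prems by (subst insert.IH) auto
    also have "\<dots> = (\<Prod>i\<in>S. w i)"
      using True insert by (metis finite_insert finite_subset prod.remove)
    finally show ?thesis .
  next
    case False
    then have "S \<subseteq> U" "(\<lambda>X. S \<subseteq> insert a X) = (\<lambda>X. S \<subseteq> X)" using insert by auto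
    then show ?thesis using insert by (simp add: bern_prob_insert algebra_simps)
  qed
qed

definition down_closed :: "'a set \<Rightarrow> ('a set \<Rightarrow> bool) \<Rightarrow> bool" where
  "down_closed U P \<longleftrightarrow> (\<forall>X Y. X \<subseteq> U \<longrightarrow> Y \<subseteq> X \<longrightarrow> P X \<longrightarrow> P Y)"

lemma down_closed_insertD:
  assumes "down_closed (insert a U) P"
  shows "down_closed U P" "down_closed U (\<lambda>X. P (insert a X))"
    and "\<And>X. X \<subseteq> U \<Longrightarrow> P (insert a X) \<Longrightarrow> P X"
proof -
  have P: "P Y" if "X \<subseteq> insert a U" "Y \<subseteq> X" "P X" for X Y
    using assms that unfolding down_closed_def by blast
  show "down_closed U P" unfolding down_closed_def using P by blast
  show "down_closed U (\<lambda>X. P (insert a X))"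
    unfolding down_closed_def using P[of "insert a _" "insert a _"] by blast
  show "P X" if "X \<subseteq> U" "P (insert a X)" for X
    using that P[of "insert a X" X] by blast
qed

lemma convex_comb_mult_le:
  fixes t x0 x1 y0 y1 :: real
  assumes "0 \<le> t" "t \<le> 1" "x1 \<le> x0" "y1 \<le> y0"
  shows "(t * x1 + (1 - t) * x0) * (t * y1 + (1 - t) * y0) \<le> t * (x1 * y1) + (1 - t) * (x0 * y0)"
proof -
  have "t * (x1 * y1) + (1 - t) * (x0 * y0) - (t * x1 + (1 - t) * x0) * (t * y1 + (1 - t) * y0)
      = t * (1 - t) * ((x0 - x1) * (y0 - y1))" by (simp add: algebra_simps)
  moreover have "0 \<le> t * (1 - t) * ((x0 - x1) * (y0 - y1))"
    using assms by (intro mult_nonneg_nonneg) auto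
  ultimately show ?thesis by linarith
qed

lemma harris_inequality:
  assumes "finite U" "\<And>i. i \<in> U \<Longrightarrow> 0 \<le> w i \<and> w i \<le> 1"
    and "down_closed U P" "down_closed U Q"
  shows "bern_prob w U P * bern_prob w U Q \<le> bern_prob w U (\<lambda>X. P X \<and> Q X)"
  using assms
proof (induction U arbitrary: P Q rule: finite_induct)
  case empty
  then show ?case by (simp add: bern_prob_empty)
next
  case (insert a U)
  let ?P1 = "\<lambda>X. P (insert a X)" and ?Q1 = "\<lambda>X. Q (insert a X)"
  have w: "\<And>i. i \<in> U \<Longrightarrow> 0 \<le> w i \<and> w i \<le> 1" "0 \<le> w a" "w a \<le> 1"
    using insert.prems by auto
  note P = down_closed_insertD[OF insert.prems(2)] and Q = down_closed_insertD[OF insert.prems(3)]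
  have "bern_prob w (insert a U) P * bern_prob w (insert a U) Q
      = (w a * bern_prob w U ?P1 + (1 - w a) * bern_prob w U P)
        * (w a * bern_prob w U ?Q1 + (1 - w a) * bern_prob w U Q)"
    using insert.hyps by (simp add: bern_prob_insert)
  also have "\<dots> \<le> w a * (bern_prob w U ?P1 * bern_prob w U ?Q1)
                 + (1 - w a) * (bern_prob w U P * bern_prob w U Q)"
  proof (rule convex_comb_mult_le[OF w(2,3)])
    show "bern_prob w U ?P1 \<le> bern_prob w U P"
      using insert.hyps(1) w(1) P(3) by (rule bern_prob_mono)
    show "bern_prob w U ?Q1 \<le> bern_prob w U Q"
      using insert.hyps(1) w(1) Q(3) by (rule bern_prob_mono)
  qed
  also have "\<dots> \<le> w a * bern_prob w U (\<lambda>X. ?P1 X \<and> ?Q1 X)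
                 + (1 - w a) * bern_prob w U (\<lambda>X. P X \<and> Q X)"
    using w(2,3) insert.IH[OF w(1) P(2) Q(2)] insert.IH[OF w(1) P(1) Q(1)]
    by (intro add_mono mult_left_mono) auto
  also have "\<dots> = bern_prob w (insert a U) (\<lambda>X. P X \<and> Q X)"
    using insert.hyps by (simp add: bern_prob_insert)
  finally show ?case .
qed

lemma harris_avoid_all:
  assumes U: "finite U" and w: "\<And>i. i \<in> U \<Longrightarrow> 0 \<le> w i \<and> w i \<le> 1"
    and "finite F" "\<And>D. D \<in> F \<Longrightarrow> D \<subseteq> U"
  shows "(\<Prod>D\<in>F. 1 - (\<Prod>i\<in>D. w i)) \<le> bern_prob w U (\<lambda>X. \<forall>D\<in>F. \<not> D \<subseteq> X)"
  using assms(3,4)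
proof (induction F rule: finite_induct)
  case empty
  then show ?case using bern_prob_True[OF U] by simp
next
  case (insert D F)
  have "1 - (\<Prod>i\<in>D. w i) = bern_prob w U (\<lambda>X. \<not> D \<subseteq> X)"
    using bern_prob_Not[OF U] bern_prob_superset[OF U] insert.prems by simp
  moreover have "0 \<le> bern_prob w U (\<lambda>X. \<not> D \<subseteq> X)"
    using bern_prob_nonneg w by blast
  ultimately have "(\<Prod>D\<in>insert D F. 1 - (\<Prod>i\<in>D. w i))
      \<le> bern_prob w U (\<lambda>X. \<not> D \<subseteq> X) * bern_prob w U (\<lambda>X. \<forall>D\<in>F. \<not> D \<subseteq> X)"
    using insert.hyps insert.IH insert.prems by (simp add: mult_left_mono)
  also have "\<dots> \<le> bern_prob w U (\<lambda>X. \<not> D \<subseteq> X \<and> (\<forall>D\<in>F. \<not> D \<subseteq> X))"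
    by (rule harris_inequality[OF U w]) (unfold down_closed_def, blast+)
  also have "\<dots> = bern_prob w U (\<lambda>X. \<forall>D\<in>insert D F. \<not> D \<subseteq> X)"
    by simp
  finally show ?case .
qed

section \<open>The random set as a product of Bernoulli measures\<close>

lemma space_bern_space: "space (bern_space w) = UNIV"
  by (auto simp: bern_space_def space_PiM PiE_def extensional_def)

lemma bern_space_cylinder:
  assumes U: "finite U" and w: "\<forall>i\<in>U. 0 \<le> w i \<and> w i \<le> 1" and X: "X \<subseteq> U"
  shows "{\<omega>. \<forall>i\<in>U. \<omega> i = (i \<in> X)} \<in> sets (bern_space w)"
    and "emeasure (bern_space w) {\<omega>. \<forall>i\<in>U. \<omega> i = (i \<in> X)} = ennreal (bern_weight w U X)"
proof -
  define M where "M n = measure_pmf (bernoulli_pmf (w n))" for n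
  have "PiE UNIV (\<lambda>i. space (M i)) = UNIV"
    by (auto simp: M_def PiE_def extensional_def)
  then have cyl: "{\<omega>. \<forall>i\<in>U. \<omega> i = (i \<in> X)} = prod_emb UNIV M U (PiE U (\<lambda>i. {i \<in> X}))"
    unfolding prod_emb_def by (auto simp: restrict_PiE_iff)
  show "{\<omega>. \<forall>i\<in>U. \<omega> i = (i \<in> X)} \<in> sets (bern_space w)"
    unfolding cyl bern_space_def M_def[symmetric] using U by (intro sets_PiM_I) (auto simp: M_def)
  have "emeasure (bern_space w) {\<omega>. \<forall>i\<in>U. \<omega> i = (i \<in> X)} = (\<Prod>i\<in>U. emeasure (M i) {i \<in> X})"
    unfolding cyl bern_space_def M_def[symmetric] using U
    by (intro emeasure_PiM_emb) (auto simp: M_def prob_space_measure_pmf)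
  also have "\<dots> = (\<Prod>i\<in>U. ennreal (if i \<in> X then w i else 1 - w i))"
    using w by (intro prod.cong) (auto simp: M_def emeasure_pmf_single)
  also have "\<dots> = ennreal (\<Prod>i\<in>U. if i \<in> X then w i else 1 - w i)"
    using w by (intro prod_ennreal) auto
  also have "(\<Prod>i\<in>U. if i \<in> X then w i else 1 - w i) = bern_weight w U X"
  proof -
    have "U \<inter> {i. i \<in> X} = X" "U \<inter> - {i. i \<in> X} = U - X" using X by auto
    then show ?thesis unfolding bern_weight_def by (simp add: prod.If_cases U)
  qed
  finally show "emeasure (bern_space w) {\<omega>. \<forall>i\<in>U. \<omega> i = (i \<in> X)} = ennreal (bern_weight w U X)" .
qed

lemma emeasure_bern_space_event:
  assumes U: "finite U" and w: "\<forall>i\<in>U. 0 \<le> w i \<and> w i \<le> 1"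
  shows "emeasure (bern_space w) {\<omega> \<in> space (bern_space w). P {i\<in>U. \<omega> i}} = ennreal (bern_prob w U P)"
proof -
  define cyl where "cyl X = {\<omega>. \<forall>i\<in>U. \<omega> i = (i \<in> X)}" for X
  define I where "I = {X. X \<subseteq> U \<and> P X}"
  have "finite I" unfolding I_def using U by (auto intro: finite_subset[of _ "Pow U"])
  have event: "{\<omega> \<in> space (bern_space w). P {i\<in>U. \<omega> i}} = (\<Union>X\<in>I. cyl X)"
  proof (rule set_eqI, rule iffI)
    fix \<omega> assume "\<omega> \<in> {\<omega> \<in> space (bern_space w). P {i\<in>U. \<omega> i}}"
    then have "{i\<in>U. \<omega> i} \<in> I" "\<omega> \<in> cyl {i\<in>U. \<omega> i}" unfolding I_def cyl_def by auto
    then show "\<omega> \<in> (\<Union>X\<in>I. cyl X)" by blast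
  next
    fix \<omega> assume "\<omega> \<in> (\<Union>X\<in>I. cyl X)"
    then obtain X where X: "X \<in> I" "\<omega> \<in> cyl X" by blast
    then have "{i\<in>U. \<omega> i} = X" unfolding cyl_def I_def by auto
    then show "\<omega> \<in> {\<omega> \<in> space (bern_space w). P {i\<in>U. \<omega> i}}"
      using X by (auto simp: I_def space_bern_space)
  qed
  have "disjoint_family_on cyl I"
    unfolding disjoint_family_on_def cyl_def I_def by (auto simp: set_eq_iff)
  then have "emeasure (bern_space w) {\<omega> \<in> space (bern_space w). P {i\<in>U. \<omega> i}}
      = (\<Sum>X\<in>I. emeasure (bern_space w) (cyl X))"
    unfolding event using \<open>finite I\<close>
    by (intro sum_emeasure[symmetric]) (auto simp: I_def cyl_def[abs_def] intro: bern_space_cylinder(1)[OF U w])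
  also have "\<dots> = (\<Sum>X\<in>I. ennreal (bern_weight w U X))"
    using bern_space_cylinder(2)[OF U w] by (intro sum.cong) (auto simp: I_def cyl_def)
  also have "\<dots> = ennreal (bern_prob w U P)"
    unfolding bern_prob_def I_def using w by (intro sum_ennreal) (auto intro!: bern_weight_nonneg)
  finally show ?thesis .
qed

section \<open>Representations and their supports\<close>

definition rep_tuples :: "(nat \<Rightarrow> nat) \<Rightarrow> nat \<Rightarrow> nat \<Rightarrow> nat list set" where
  "rep_tuples b h n = {k. length k = h \<and> (\<Sum>i<h. b (Suc i) * k ! i) = n}"

text \<open>Only the nonzero entries of a representation matter: \<open>0\<close> lies in every \<open>rand_set \<omega>\<close>.\<close>

definition rep_supports :: "(nat \<Rightarrow> nat) \<Rightarrow> nat \<Rightarrow> nat \<Rightarrow> nat set set" where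
  "rep_supports b h n = (\<lambda>k. set k - {0}) ` rep_tuples b h n"

lemma rep_tuples_elem_le:
  assumes b: "\<forall>i\<in>{1..h}. b i > 0" and k: "k \<in> rep_tuples b h n" and x: "x \<in> set k"
  shows "x \<le> n"
proof -
  obtain j where j: "j < h" "x = k ! j"
    using x k by (auto simp: in_set_conv_nth rep_tuples_def)
  moreover have "b (Suc j) > 0" using b j by auto
  ultimately have "x \<le> b (Suc j) * k ! j" by simp
  also have "\<dots> \<le> (\<Sum>i<h. b (Suc i) * k ! i)" using j by (intro member_le_sum) auto
  finally show ?thesis using k by (simp add: rep_tuples_def)
qed

lemma finite_rep_tuples:
  assumes "\<forall>i\<in>{1..h}. b i > 0"
  shows "finite (rep_tuples b h n)"
proof (rule finite_subset)
  show "rep_tuples b h n \<subseteq> {k. set k \<subseteq> {0..n} \<and> length k = h}"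
    using rep_tuples_elem_le[OF assms] by (auto simp: rep_tuples_def)
qed (rule finite_lists_length_eq, simp)

lemma finite_rep_supports: "\<forall>i\<in>{1..h}. b i > 0 \<Longrightarrow> finite (rep_supports b h n)"
  unfolding rep_supports_def using finite_rep_tuples by blast

lemma rep_supports_subset:
  assumes b: "\<forall>i\<in>{1..h}. b i > 0" and D: "D \<in> rep_supports b h n"
  shows "D \<subseteq> {1..n}"
proof -
  obtain k where "k \<in> rep_tuples b h n" "D = set k - {0}"
    using D unfolding rep_supports_def by blast
  then show ?thesis using rep_tuples_elem_le[OF b] by (auto simp: Suc_le_eq)
qed

lemma card_rep_supports_le:
  assumes "D \<in> rep_supports b h n"
  shows "card D \<le> h"
proof -
  obtain t where t: "length t = h" "D = set t - {0}"
    using assms by (auto simp: rep_supports_def rep_tuples_def)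
  have "card D \<le> card (set t)" using t(2) by (intro card_mono) auto
  also have "\<dots> \<le> h" using t(1) card_length by metis
  finally show ?thesis .
qed

lemma rep_rand_set_eq_0_iff:
  assumes b: "\<forall>i\<in>{1..h}. b i > 0"
  shows "rep b (rand_set \<omega>) h n = 0 \<longleftrightarrow> (\<forall>D\<in>rep_supports b h n. \<not> D \<subseteq> {i\<in>{1..n}. \<omega> i})"
proof -
  have "rep b (rand_set \<omega>) h n = card {k \<in> rep_tuples b h n. set k \<subseteq> rand_set \<omega>}"
    unfolding rep_def rep_tuples_def by (rule arg_cong[where f=card]) auto
  also have "\<dots> = 0 \<longleftrightarrow> (\<forall>k\<in>rep_tuples b h n. \<not> set k \<subseteq> rand_set \<omega>)"
    using finite_rep_tuples[OF b] by auto
  also have "\<dots> \<longleftrightarrow> (\<forall>k\<in>rep_tuples b h n. \<not> set k - {0} \<subseteq> {i\<in>{1..n}. \<omega> i})"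
    using rep_tuples_elem_le[OF b] by (intro ball_cong refl) (auto simp: rand_set_def)
  finally show ?thesis
    unfolding rep_supports_def by simp
qed

lemma emeasure_rep_eq_0_ge:
  assumes b: "\<forall>i\<in>{1..h}. b i > 0" and w: "\<forall>i\<in>{1..n}. 0 \<le> w i \<and> w i \<le> 1"
  shows "ennreal (\<Prod>D\<in>rep_supports b h n. 1 - (\<Prod>i\<in>D. w i))
     \<le> emeasure (bern_space w) {\<omega> \<in> space (bern_space w). rep b (rand_set \<omega>) h n = 0}"
proof -
  let ?P = "\<lambda>X. \<forall>D\<in>rep_supports b h n. \<not> D \<subseteq> X"
  have "(\<Prod>D\<in>rep_supports b h n. 1 - (\<Prod>i\<in>D. w i)) \<le> bern_prob w {1..n} ?P"
    using w finite_rep_supports[OF b] rep_supports_subset[OF b] by (intro harris_avoid_all) auto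
  also have "ennreal (bern_prob w {1..n} ?P)
      = emeasure (bern_space w) {\<omega> \<in> space (bern_space w). ?P {i\<in>{1..n}. \<omega> i}}"
    using w by (intro emeasure_bern_space_event[symmetric]) auto
  finally show ?thesis
    unfolding rep_rand_set_eq_0_iff[OF b] by (simp only: ennreal_leI)
qed

lemma rep_supports_large_elem:
  assumes b: "\<forall>i\<in>{1..h}. b i > 0" and D: "D \<in> rep_supports b h n" and n: "n \<ge> 1"
  shows "\<exists>k\<in>D. n \<le> k * (Max (b ` {1..h}) * h)"
proof (rule ccontr)
  obtain t where t: "length t = h" "(\<Sum>i<h. b (Suc i) * t ! i) = n" "D = set t - {0}"
    using D by (auto simp: rep_supports_def rep_tuples_def)
  assume "\<not> ?thesis"
  then have small: "k * (Max (b ` {1..h}) * h) < n" if "k \<in> D" for k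
    using that by (auto simp: not_le)
  have "b (Suc j) * t ! j * h < n" if "j < h" for j
  proof (cases "t ! j = 0")
    case False
    then have "t ! j \<in> D" using that t by auto
    have "b (Suc j) \<le> Max (b ` {1..h})" using that by (intro Max_ge) auto
    then have "b (Suc j) * t ! j * h \<le> t ! j * (Max (b ` {1..h}) * h)"
      by (simp add: mult_le_mono1 algebra_simps)
    then show ?thesis using small[OF \<open>t ! j \<in> D\<close>] by linarith
  qed (use n in simp)
  then have "(\<Sum>i<h. b (Suc i) * t ! i * h) < (\<Sum>i<h. n)"
    using n t by (intro sum_strict_mono) (auto simp: lessThan_empty_iff)
  then show False using t by (simp add: sum_distrib_right[symmetric])
qed

lemma card_rep_supports_index:
  "card {n\<in>{1..N}. D \<in> rep_supports b h n} \<le> (card D + 1) ^ h"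
proof (cases "finite D")
  case False
  have "finite D" if "D \<in> rep_supports b h n" for n
    using that unfolding rep_supports_def by auto
  then have "{n\<in>{1..N}. D \<in> rep_supports b h n} = {}" using False by blast
  then show ?thesis by (metis card.empty zero_le)
next
  case True
  define L where "L = {t. set t \<subseteq> insert 0 D \<and> length t = h}"
  have "finite L" unfolding L_def using True by (intro finite_lists_length_eq) auto
  have "{n\<in>{1..N}. D \<in> rep_supports b h n} \<subseteq> (\<lambda>t. \<Sum>i<h. b (Suc i) * t ! i) ` L"
  proof
    fix n assume "n \<in> {n\<in>{1..N}. D \<in> rep_supports b h n}"
    then obtain t where "t \<in> rep_tuples b h n" "D = set t - {0}" unfolding rep_supports_def by auto
    then show "n \<in> (\<lambda>t. \<Sum>i<h. b (Suc i) * t ! i) ` L" unfolding L_def rep_tuples_def by auto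
  qed
  then have "card {n\<in>{1..N}. D \<in> rep_supports b h n} \<le> card ((\<lambda>t. \<Sum>i<h. b (Suc i) * t ! i) ` L)"
    using \<open>finite L\<close> by (intro card_mono) auto
  also have "\<dots> \<le> card L" using \<open>finite L\<close> by (rule card_image_le)
  also have "\<dots> = card (insert 0 D) ^ h" unfolding L_def using True by (intro card_lists_length_eq) auto
  also have "\<dots> \<le> (card D + 1) ^ h" using True by (intro power_mono) (auto simp: card_insert_if)
  finally show ?thesis .
qed

section \<open>Riemann sums and the Beta integral\<close>

lemma integral_ge_right_endpoint:
  fixes \<phi> :: "real \<Rightarrow> real"
  assumes int: "\<phi> integrable_on {lo..hi}" and "lo \<le> hi"
    and dec: "\<And>x. lo < x \<Longrightarrow> x \<le> hi \<Longrightarrow> \<phi> hi \<le> \<phi> x"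
  shows "(hi - lo) * \<phi> hi \<le> integral {lo..hi} \<phi>"
proof -
  define \<psi> where "\<psi> x = (if x = lo then \<phi> hi else \<phi> x)" for x
  have "\<psi> integrable_on {lo..hi}"
    by (rule integrable_spike_finite[where S="{lo}", OF _ _ int]) (auto simp: \<psi>_def)
  then have "integral {lo..hi} (\<lambda>x. \<phi> hi) \<le> integral {lo..hi} \<psi>"
    using dec by (intro integral_le) (auto simp: \<psi>_def)
  also have "integral {lo..hi} \<psi> = integral {lo..hi} \<phi>"
    unfolding \<psi>_def by (rule integral_spike[of "{lo}"]) auto
  finally show ?thesis using \<open>lo \<le> hi\<close> by simp
qed

lemma sum_le_integral_antimono:
  fixes \<phi> :: "real \<Rightarrow> real" and X I :: real and K :: nat
  assumes int: "(\<phi> has_integral I) {0..1}"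
    and dec: "\<And>s t. 0 < s \<Longrightarrow> s \<le> t \<Longrightarrow> t \<le> 1 \<Longrightarrow> \<phi> t \<le> \<phi> s"
    and nonneg: "\<And>t. 0 \<le> t \<Longrightarrow> t \<le> 1 \<Longrightarrow> 0 \<le> \<phi> t"
    and X: "X > 0" and K: "real K \<le> X"
  shows "(\<Sum>k=1..K. \<phi> (real k / X)) \<le> X * I"
proof -
  have sub: "\<phi> integrable_on {c..d}" if "0 \<le> c" "d \<le> 1" for c d
    using int that by (cases "c \<le> d") (auto intro: integrable_subinterval_real)
  have combine: "integral {0..c} \<phi> + integral {c..d} \<phi> = integral {0..d} \<phi>"
    if "0 \<le> c" "c \<le> d" "d \<le> 1" for c d
    using that sub[of 0 d] by (intro Henstock_Kurzweil_Integration.integral_combine) auto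
  have riemann: "(\<Sum>k=1..m. \<phi> (real k / X)) / X \<le> integral {0..real m / X} \<phi>" if "m \<le> K" for m
    using that
  proof (induction m)
    case (Suc m)
    define lo where "lo = real m / X"
    define hi where "hi = real (Suc m) / X"
    have lohi: "0 \<le> lo" "lo \<le> hi" "hi \<le> 1" "hi - lo = 1 / X"
      using X Suc.prems K by (auto simp: lo_def hi_def divide_right_mono field_simps)
    have "\<phi> hi / X \<le> integral {lo..hi} \<phi>"
      using integral_ge_right_endpoint[OF sub[of lo hi] _ dec] lohi by (simp add: algebra_simps)
    then have "(\<Sum>k=1..Suc m. \<phi> (real k / X)) / X \<le> integral {0..lo} \<phi> + integral {lo..hi} \<phi>"
      using Suc by (simp add: hi_def lo_def add_divide_distrib)
    then show ?case using combine[of lo hi] lohi by (simp add: hi_def)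
  qed simp
  have "0 \<le> real K / X" using X by simp
  then have "0 \<le> integral {real K / X..1} \<phi>"
    by (intro integral_nonneg sub nonneg) auto
  moreover have "integral {0..real K / X} \<phi> + integral {real K / X..1} \<phi> = I"
    using combine[of "real K / X" 1] X K int by (simp add: integral_unique)
  ultimately have "(\<Sum>k=1..K. \<phi> (real k / X)) / X \<le> I" using riemann[of K] by simp
  then show ?thesis using X by (simp add: field_simps)
qed

lemma sum_powr_le:
  fixes a X :: real
  assumes a: "0 < a" "a \<le> 1" and X: "0 \<le> X"
  shows "(\<Sum>k=1..nat \<lfloor>X\<rfloor>. real k powr (a - 1)) \<le> X powr a / a"
proof (cases "X < 1")
  case True
  then have "nat \<lfloor>X\<rfloor> = 0" using X by linarith
  then show ?thesis using a by simp
next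
  case False
  have "Gamma (a + 1) = a * Gamma a" "Gamma a > 0"
    using a Gamma_plus1[of a] nonpos_Ints_nonpos by fastforce+
  then have "Beta a 1 = 1 / a"
    by (simp add: Beta_def add.commute)
  then have "((\<lambda>t. t powr (a - 1)) has_integral 1 / a) {0..1}"
    using has_integral_Beta_real[of a 1] a by (rule_tac has_integral_spike_finite[where S="{1}"]) auto
  then have le: "(\<Sum>k=1..nat \<lfloor>X\<rfloor>. (real k / X) powr (a - 1)) \<le> X * (1 / a)"
    using False a by (intro sum_le_integral_antimono) (auto intro: powr_mono2')
  have "(\<Sum>k=1..nat \<lfloor>X\<rfloor>. real k powr (a - 1))
      = X powr (a - 1) * (\<Sum>k=1..nat \<lfloor>X\<rfloor>. (real k / X) powr (a - 1))"
    unfolding sum_distrib_left using False by (intro sum.cong) (auto simp: powr_divide)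
  also have "\<dots> \<le> X powr (a - 1) * (X * (1 / a))"
    using le by (intro mult_left_mono) auto
  also have "\<dots> = X powr a / a"
    using False by (simp add: powr_diff field_simps)
  finally show ?thesis .
qed

lemma sum_powr_mult_powr_le_Beta:
  fixes a e X :: real
  assumes a: "0 < a" "a \<le> 1" and e: "0 < e" and X: "0 \<le> X"
  shows "(\<Sum>k=1..nat \<lfloor>X\<rfloor>. real k powr (a - 1) * (X - real k) powr e) \<le> X powr (a + e) * Beta a (e + 1)"
proof (cases "X < 1")
  case True
  then have "nat \<lfloor>X\<rfloor> = 0" using X by linarith
  moreover have "Beta a (e + 1) \<ge> 0" using a e unfolding Beta_def
    by (intro divide_nonneg_pos mult_nonneg_nonneg) (auto intro!: less_imp_le Gamma_real_pos)
  ultimately show ?thesis by simp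
next
  case False
  define \<phi> where "\<phi> t = t powr (a - 1) * (1 - t) powr e" for t :: real
  have "(\<phi> has_integral Beta a (e + 1)) {0..1}"
    using has_integral_Beta_real[of a "e + 1"] a e unfolding \<phi>_def by simp
  then have le: "(\<Sum>k=1..nat \<lfloor>X\<rfloor>. \<phi> (real k / X)) \<le> X * Beta a (e + 1)"
  proof (rule sum_le_integral_antimono)
    show "\<phi> t \<le> \<phi> s" if "0 < s" "s \<le> t" "t \<le> 1" for s t
      unfolding \<phi>_def using that a e by (intro mult_mono powr_mono2' powr_mono2) auto
  qed (use False in \<open>auto simp: \<phi>_def\<close>)
  have "real k powr (a - 1) * (X - real k) powr e = X powr (a - 1) * X powr e * \<phi> (real k / X)"
    if "k \<in> {1..nat \<lfloor>X\<rfloor>}" for k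
  proof -
    have "1 - real k / X = (X - real k) / X" using False by (simp add: field_simps)
    then show ?thesis using False by (simp add: \<phi>_def powr_divide field_simps)
  qed
  then have "(\<Sum>k=1..nat \<lfloor>X\<rfloor>. real k powr (a - 1) * (X - real k) powr e)
      = X powr (a - 1) * X powr e * (\<Sum>k=1..nat \<lfloor>X\<rfloor>. \<phi> (real k / X))"
    unfolding sum_distrib_left by (intro sum.cong) auto
  also have "\<dots> \<le> X powr (a - 1) * X powr e * (X * Beta a (e + 1))"
    using le by (intro mult_left_mono) auto
  also have "\<dots> = X powr (a + e) * Beta a (e + 1)"
    using False by (simp add: powr_diff powr_add field_simps)
  finally show ?thesis .
qed

section \<open>Weighted compositions\<close>

definition wcomps :: "nat list \<Rightarrow> real \<Rightarrow> nat list set" where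
  "wcomps bs x = {t. length t = length bs \<and> (\<forall>k\<in>set t. 1 \<le> k) \<and> real (sum_list (map2 (*) bs t)) \<le> x}"

fun wcomp_sum :: "(nat \<Rightarrow> real) \<Rightarrow> nat list \<Rightarrow> real \<Rightarrow> real" where
  "wcomp_sum f [] x = (if 0 \<le> x then 1 else 0)"
| "wcomp_sum f (\<beta> # bs) x = (\<Sum>k=1..nat \<lfloor>x / real \<beta>\<rfloor>. f k * wcomp_sum f bs (x - real \<beta> * real k))"

lemma mem_1_nat_floor_iff: "k \<in> {1..nat \<lfloor>y\<rfloor>} \<longleftrightarrow> 1 \<le> k \<and> real k \<le> y"
  by (cases "0 \<le> \<lfloor>y\<rfloor>") (auto simp: le_nat_iff le_floor_iff)

lemma wcomps_Cons:
  assumes "\<beta> > 0"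
  shows "wcomps (\<beta> # bs) x = (\<Union>k\<in>{1..nat \<lfloor>x / real \<beta>\<rfloor>}. (#) k ` wcomps bs (x - real \<beta> * real k))"
proof (rule set_eqI, rule iffI)
  fix t assume "t \<in> wcomps (\<beta> # bs) x"
  then obtain k t' where t: "t = k # t'" "1 \<le> k" "t' \<in> wcomps bs (x - real \<beta> * real k)"
      "real \<beta> * real k \<le> x"
    unfolding wcomps_def by (cases t) auto
  then have "real k \<le> x / real \<beta>"
    using assms by (simp add: field_simps)
  then have "k \<in> {1..nat \<lfloor>x / real \<beta>\<rfloor>}"
    using t(2) mem_1_nat_floor_iff by blast
  then show "t \<in> (\<Union>k\<in>{1..nat \<lfloor>x / real \<beta>\<rfloor>}. (#) k ` wcomps bs (x - real \<beta> * real k))"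
    using t by blast
qed (auto simp: wcomps_def mem_1_nat_floor_iff)

lemma finite_wcomps: "\<forall>\<beta>\<in>set bs. \<beta> > 0 \<Longrightarrow> finite (wcomps bs x)"
proof (induction bs arbitrary: x)
  case Nil
  have "wcomps [] x \<subseteq> {[]}" by (auto simp: wcomps_def)
  then show ?case by (rule finite_subset) simp
qed (simp add: wcomps_Cons)

lemma sum_wcomps:
  "\<forall>\<beta>\<in>set bs. \<beta> > 0 \<Longrightarrow> (\<Sum>t\<in>wcomps bs x. prod_list (map f t)) = wcomp_sum f bs x"
proof (induction bs arbitrary: x)
  case Nil
  have "wcomps [] x = (if 0 \<le> x then {[]} else {})" by (auto simp: wcomps_def)
  then show ?case by simp
next
  case (Cons \<beta> bs)
  let ?A = "\<lambda>k. (#) k ` wcomps bs (x - real \<beta> * real k)"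
  have "(\<Sum>t\<in>wcomps (\<beta> # bs) x. prod_list (map f t)) = (\<Sum>k=1..nat \<lfloor>x / real \<beta>\<rfloor>. \<Sum>t\<in>?A k. prod_list (map f t))"
    unfolding wcomps_Cons[OF bspec[OF Cons.prems, of \<beta>, simplified]]
    using Cons.prems by (intro sum.UNION_disjoint) (auto simp: finite_wcomps)
  also have "\<dots> = (\<Sum>k=1..nat \<lfloor>x / real \<beta>\<rfloor>. f k * wcomp_sum f bs (x - real \<beta> * real k))"
    using Cons by (intro sum.cong refl) (simp add: sum.reindex sum_distrib_left[symmetric])
  finally show ?case by simp
qed

lemma wcomp_sum_scale: "wcomp_sum (\<lambda>k. C * f k) bs x = C ^ length bs * wcomp_sum f bs x"
  by (induction bs arbitrary: x) (auto simp: sum_distrib_left algebra_simps)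

lemma wcomp_sum_Cons_powr_le:
  fixes a e C x :: real
  assumes a: "0 < a" "a \<le> 1" and e: "0 < e" and \<beta>: "\<beta> > 0" and x: "0 \<le> x" and C: "0 \<le> C"
    and bound: "\<And>y. 0 \<le> y \<Longrightarrow> wcomp_sum (\<lambda>k. real k powr (a - 1)) bs y \<le> C * y powr e"
  shows "wcomp_sum (\<lambda>k. real k powr (a - 1)) (\<beta> # bs) x
      \<le> C * Beta a (e + 1) * x powr (a + e) / real \<beta> powr a"
proof -
  define X where "X = x / real \<beta>"
  have X: "0 \<le> X" using x by (simp add: X_def)
  have shift: "x - real \<beta> * real k = real \<beta> * (X - real k)" for k
    using \<beta> by (simp add: X_def field_simps)
  have "wcomp_sum (\<lambda>k. real k powr (a - 1)) (\<beta> # bs) x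
      = (\<Sum>k=1..nat \<lfloor>X\<rfloor>. real k powr (a - 1) * wcomp_sum (\<lambda>k. real k powr (a - 1)) bs (x - real \<beta> * real k))"
    by (simp add: X_def)
  also have "\<dots> \<le> (\<Sum>k=1..nat \<lfloor>X\<rfloor>. real k powr (a - 1) * (C * (x - real \<beta> * real k) powr e))"
  proof (intro sum_mono mult_left_mono bound)
    fix k assume "k \<in> {1..nat \<lfloor>X\<rfloor>}"
    then show "0 \<le> x - real \<beta> * real k"
      unfolding shift mem_1_nat_floor_iff using \<beta> by simp
  qed simp
  also have "\<dots> = C * real \<beta> powr e * (\<Sum>k=1..nat \<lfloor>X\<rfloor>. real k powr (a - 1) * (X - real k) powr e)"
    unfolding shift sum_distrib_left by (intro sum.cong) (auto simp: powr_mult)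
  also have "\<dots> \<le> C * real \<beta> powr e * (X powr (a + e) * Beta a (e + 1))"
    using C by (intro mult_left_mono sum_powr_mult_powr_le_Beta a e X) auto
  also have "\<dots> = C * Beta a (e + 1) * x powr (a + e) / real \<beta> powr a"
    using \<beta> by (simp add: X_def powr_divide powr_add field_simps)
  finally show ?thesis .
qed

lemma wcomp_sum_powr_le:
  fixes a x :: real
  assumes a: "0 < a" "a \<le> 1" and bs: "bs \<noteq> []" "\<forall>\<beta>\<in>set bs. \<beta> > 0" and x: "0 \<le> x"
  shows "wcomp_sum (\<lambda>k. real k powr (a - 1)) bs x
     \<le> Gamma a ^ length bs * x powr (real (length bs) * a)
        / (prod_list (map (\<lambda>\<beta>. real \<beta> powr a) bs) * Gamma (real (length bs) * a + 1))"
  using bs x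
proof (induction bs arbitrary: x)
  case (Cons \<beta> bs)
  have \<beta>: "real \<beta> > 0" using Cons.prems by auto
  have Ga: "Gamma a > 0" "Gamma (a + 1) = a * Gamma a"
    using a Gamma_plus1[of a] nonpos_Ints_nonpos by fastforce+
  show ?case
  proof (cases "bs = []")
    case True
    have "wcomp_sum (\<lambda>k. real k powr (a - 1)) [\<beta>] x = (\<Sum>k=1..nat \<lfloor>x / real \<beta>\<rfloor>. real k powr (a - 1))"
      unfolding wcomp_sum.simps
    proof (intro sum.cong refl)
      fix k assume "k \<in> {1..nat \<lfloor>x / real \<beta>\<rfloor>}"
      then have "real k \<le> x / real \<beta>" by (simp only: mem_1_nat_floor_iff)
      then show "real k powr (a - 1) * (if 0 \<le> x - real \<beta> * real k then 1 else 0) = real k powr (a - 1)"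
        using \<beta> by (simp add: field_simps)
    qed
    also have "\<dots> \<le> (x / real \<beta>) powr a / a"
      using Cons.prems \<beta> by (intro sum_powr_le a) auto
    also have "\<dots> = Gamma a * x powr a / (real \<beta> powr a * Gamma (a + 1))"
      using Ga a \<beta> by (simp add: powr_divide field_simps less_imp_neq[symmetric])
    finally show ?thesis using True by simp
  next
    case False
    define m where "m = real (length bs)"
    define P where "P = prod_list (map (\<lambda>\<beta>. real \<beta> powr a) bs)"
    have m: "m * a > 0" using False a by (simp add: m_def)
    have P: "P > 0"
      unfolding P_def using Cons.prems
      by (intro order.not_eq_order_implies_strict prod_list_nonneg) (auto simp: prod_list_zero_iff)
    have G: "Gamma (m * a + 1) > 0" "Gamma (a + m * a + 1) > 0"
      using m a by (auto intro!: Gamma_real_pos)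
    have "wcomp_sum (\<lambda>k. real k powr (a - 1)) (\<beta> # bs) x
        \<le> Gamma a ^ length bs / (P * Gamma (m * a + 1)) * Beta a (m * a + 1) * x powr (a + m * a)
          / real \<beta> powr a"
      using Cons False Ga P G by (intro wcomp_sum_Cons_powr_le a m) (auto simp: m_def P_def)
    also have "\<dots> = Gamma a ^ length (\<beta> # bs) * x powr (real (length (\<beta> # bs)) * a)
        / (prod_list (map (\<lambda>\<beta>. real \<beta> powr a) (\<beta> # bs)) * Gamma (real (length (\<beta> # bs)) * a + 1))"
      using Ga P G \<beta> by (simp add: Beta_def P_def m_def algebra_simps)
    finally show ?thesis .
  qed
qed simp

section \<open>The expected number of representations\<close>

lemma full_rep_supports_le_tuples:
  fixes p :: "nat \<Rightarrow> real"
  assumes b: "\<forall>i\<in>{1..h}. b i > 0" and p: "\<And>k. 1 \<le> k \<Longrightarrow> k \<le> n \<Longrightarrow> 0 \<le> p k"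
  shows "(\<Sum>D | D \<in> rep_supports b h n \<and> card D = h. \<Prod>i\<in>D. p i)
      \<le> (\<Sum>t | t \<in> rep_tuples b h n \<and> distinct t \<and> 0 \<notin> set t. \<Prod>i\<in>set t. p i)"
proof -
  let ?G = "{t. t \<in> rep_tuples b h n \<and> distinct t \<and> 0 \<notin> set t}"
  have "finite ?G" using finite_rep_tuples[OF b] by simp
  have nonneg: "0 \<le> (\<Prod>i\<in>set t. p i)" if "t \<in> ?G" for t
  proof (intro prod_nonneg ballI)
    fix k assume k: "k \<in> set t"
    have "0 \<notin> set t" using that by simp
    then have "k \<noteq> 0" using k by metis
    moreover have "k \<le> n" using k that rep_tuples_elem_le[OF b, of t n k] by simp
    ultimately show "0 \<le> p k" using p by simp
  qed
  have "{D. D \<in> rep_supports b h n \<and> card D = h} \<subseteq> set ` ?G"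
  proof
    fix D assume "D \<in> {D. D \<in> rep_supports b h n \<and> card D = h}"
    then obtain t where t: "t \<in> rep_tuples b h n" "D = set t - {0}" "card D = h"
      unfolding rep_supports_def by auto
    have "length t = h" using t(1) by (simp add: rep_tuples_def)
    then have "card (set t) \<le> h" by (metis card_length)
    have "0 \<notin> set t"
    proof
      assume "0 \<in> set t"
      then have "card D < card (set t)" using t(2) by (intro psubset_card_mono) auto
      then show False using t(3) \<open>card (set t) \<le> h\<close> by simp
    qed
    then have "card (set t) = h" using t by simp
    then have "distinct t" using \<open>length t = h\<close> by (metis card_distinct)
    then show "D \<in> set ` ?G" using t \<open>0 \<notin> set t\<close> by auto
  qed
  then have "(\<Sum>D | D \<in> rep_supports b h n \<and> card D = h. \<Prod>i\<in>D. p i) \<le> (\<Sum>D\<in>set ` ?G. \<Prod>i\<in>D. p i)"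
    using \<open>finite ?G\<close> nonneg by (intro sum_mono2) auto
  also have "\<dots> \<le> (\<Sum>t\<in>?G. \<Prod>i\<in>set t. p i)"
    using sum_image_le[OF \<open>finite ?G\<close>, of "\<lambda>D. \<Prod>i\<in>D. p i" set] nonneg by (simp add: o_def)
  finally show ?thesis .
qed

lemma zero_free_rep_tuples_subset_wcomps:
  assumes "n \<le> N"
  shows "{t \<in> rep_tuples b h n. 0 \<notin> set t} \<subseteq> wcomps (map b [1..<Suc h]) (real N)"
proof
  fix t assume t: "t \<in> {t \<in> rep_tuples b h n. 0 \<notin> set t}"
  then have "length t = h" "(\<Sum>i<h. b (Suc i) * t ! i) = n"
    by (auto simp: rep_tuples_def)
  moreover have "sum_list (map2 (*) (map b [1..<Suc h]) t) = (\<Sum>i<h. b (Suc i) * t ! i)"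
    using \<open>length t = h\<close> by (simp add: sum_list_sum_nth atLeast0LessThan del: upt_Suc)
  moreover have "\<forall>k\<in>set t. 1 \<le> k"
  proof
    fix k assume "k \<in> set t"
    moreover have "0 \<notin> set t" using t by simp
    ultimately have "k \<noteq> 0" by metis
    then show "1 \<le> k" by simp
  qed
  ultimately show "t \<in> wcomps (map b [1..<Suc h]) (real N)"
    using assms by (simp add: wcomps_def)
qed

lemma sum_zero_free_tuples_le_wcomp_sum:
  fixes p g :: "nat \<Rightarrow> real"
  assumes b: "\<forall>i\<in>{1..h}. b i > 0"
    and p: "\<And>k. 1 \<le> k \<Longrightarrow> k \<le> N \<Longrightarrow> 0 \<le> p k \<and> p k \<le> g k" and g: "\<And>k. 0 \<le> g k"
  shows "(\<Sum>n=1..N. \<Sum>t | t \<in> rep_tuples b h n \<and> distinct t \<and> 0 \<notin> set t. \<Prod>i\<in>set t. p i)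
     \<le> wcomp_sum g (map b [1..<Suc h]) (real N)"
proof -
  define bs where "bs = map b [1..<Suc h]"
  define G where "G n = {t. t \<in> rep_tuples b h n \<and> distinct t \<and> 0 \<notin> set t}" for n
  have bs: "\<forall>\<beta>\<in>set bs. \<beta> > 0" using b by (auto simp: bs_def)
  have G: "finite (G n)" "G n \<subseteq> wcomps bs (real N)" if "n \<le> N" for n
  proof -
    show "finite (G n)" using finite_rep_tuples[OF b] by (simp add: G_def)
    have "G n \<subseteq> {t \<in> rep_tuples b h n. 0 \<notin> set t}" by (auto simp: G_def)
    then show "G n \<subseteq> wcomps bs (real N)"
      unfolding bs_def using zero_free_rep_tuples_subset_wcomps[OF that] by (rule order.trans)
  qed
  have "(\<Sum>n=1..N. \<Sum>t\<in>G n. \<Prod>i\<in>set t. p i) = (\<Sum>t\<in>(\<Union>n\<in>{1..N}. G n). \<Prod>i\<in>set t. p i)"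
    using G by (intro sum.UNION_disjoint[symmetric]) (auto simp: G_def rep_tuples_def)
  also have "\<dots> \<le> (\<Sum>t\<in>(\<Union>n\<in>{1..N}. G n). prod_list (map g t))"
  proof (rule sum_mono)
    fix t assume "t \<in> (\<Union>n\<in>{1..N}. G n)"
    then obtain n where n: "n \<le> N" "t \<in> G n" by auto
    then have "distinct t" "t \<in> wcomps bs (real N)" using G by (auto simp: G_def)
    moreover have "k \<le> N" if "k \<in> set t" for k
      using n that rep_tuples_elem_le[OF b, of t n k] by (simp add: G_def)
    ultimately have "distinct t" "\<forall>k\<in>set t. 1 \<le> k \<and> k \<le> N"
      by (auto simp: wcomps_def)
    then show "(\<Prod>i\<in>set t. p i) \<le> prod_list (map g t)"
      using p by (simp add: prod.distinct_set_conv_list[symmetric] prod_mono)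
  qed
  also have "\<dots> \<le> (\<Sum>t\<in>wcomps bs (real N). prod_list (map g t))"
  proof (rule sum_mono2)
    show "(\<Union>n\<in>{1..N}. G n) \<subseteq> wcomps bs (real N)" using G(2) by fastforce
  qed (use finite_wcomps[OF bs] g in \<open>auto intro!: prod_list_nonneg\<close>)
  also have "\<dots> = wcomp_sum g bs (real N)"
    by (rule sum_wcomps[OF bs])
  finally show ?thesis by (simp add: G_def bs_def)
qed

lemma prod_list_powr_map_upt:
  "prod_list (map (\<lambda>\<beta>. real \<beta> powr a) (map b [1..<Suc h])) = real (\<Prod>i=1..h. b i) powr a"
proof -
  have "prod_list (map (\<lambda>\<beta>. real \<beta> powr a) (map b [1..<Suc h])) = (\<Prod>i\<in>set [1..<Suc h]. real (b i) powr a)"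
    unfolding map_map o_def by (rule prod.distinct_set_conv_list[symmetric]) simp
  also have "set [1..<Suc h] = {1..h}" by auto
  finally show ?thesis by (simp add: prod_powr_distrib)
qed

lemma sum_full_supports_le:
  fixes p :: "nat \<Rightarrow> real" and C a :: real
  assumes b: "\<forall>i\<in>{1..h}. b i > 0" and h: "h \<ge> 1" and a: "0 < a" "a \<le> 1" and C: "0 \<le> C"
    and p: "\<And>k. 1 \<le> k \<Longrightarrow> k \<le> N \<Longrightarrow> 0 \<le> p k \<and> p k \<le> C * real k powr (a - 1)"
  shows "(\<Sum>n=1..N. \<Sum>D | D \<in> rep_supports b h n \<and> card D = h. \<Prod>i\<in>D. p i)
     \<le> C ^ h * Gamma a ^ h * real N powr (real h * a)
        / (real (\<Prod>i=1..h. b i) powr a * Gamma (real h * a + 1))"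
proof -
  define bs where "bs = map b [1..<Suc h]"
  have bs: "bs \<noteq> []" "\<forall>\<beta>\<in>set bs. \<beta> > 0" "length bs = h" using b h by (auto simp: bs_def)
  have "(\<Sum>n=1..N. \<Sum>D | D \<in> rep_supports b h n \<and> card D = h. \<Prod>i\<in>D. p i)
      \<le> (\<Sum>n=1..N. \<Sum>t | t \<in> rep_tuples b h n \<and> distinct t \<and> 0 \<notin> set t. \<Prod>i\<in>set t. p i)"
    using p by (intro sum_mono full_rep_supports_le_tuples[OF b]) auto
  also have "\<dots> \<le> wcomp_sum (\<lambda>k. C * real k powr (a - 1)) bs (real N)"
    unfolding bs_def using p C by (intro sum_zero_free_tuples_le_wcomp_sum[OF b]) auto
  also have "\<dots> = C ^ h * wcomp_sum (\<lambda>k. real k powr (a - 1)) bs (real N)"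
    using bs(3) by (simp add: wcomp_sum_scale)
  also have "\<dots> \<le> C ^ h * (Gamma a ^ h * real N powr (real h * a)
        / (real (\<Prod>i=1..h. b i) powr a * Gamma (real h * a + 1)))"
    using wcomp_sum_powr_le[OF a bs(1,2), of "real N"] C
    unfolding bs(3) unfolding bs_def prod_list_powr_map_upt by (intro mult_left_mono) auto
  finally show ?thesis by (simp only: times_divide_eq_right mult.assoc)
qed

corollary sum_full_supports_le_inverse:
  fixes p :: "nat \<Rightarrow> real" and C :: real
  assumes b: "\<forall>i\<in>{1..h}. b i > 0" and h: "h \<ge> 1" and C: "0 \<le> C"
    and p: "\<And>k. 1 \<le> k \<Longrightarrow> k \<le> N \<Longrightarrow> 0 \<le> p k \<and> p k \<le> C * real k powr (1 / real h - 1)"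
  shows "(\<Sum>n=1..N. \<Sum>D | D \<in> rep_supports b h n \<and> card D = h. \<Prod>i\<in>D. p i)
     \<le> C ^ h * Gamma (1 / real h) ^ h / real (\<Prod>i=1..h. b i) powr (1 / real h) * real N"
proof -
  have "Gamma (real h * (1 / real h) + 1) = 1"
    using h Gamma_fact[of 1] by simp
  then show ?thesis
    using sum_full_supports_le[OF b h _ _ C p] h by simp
qed

lemma sum_prod_small_subsets_le:
  fixes p :: "'a \<Rightarrow> real"
  assumes U: "finite U" and p: "\<And>i. i \<in> U \<Longrightarrow> 0 \<le> p i" and Q: "(\<Sum>i\<in>U. p i) \<le> Q" "1 \<le> Q"
  shows "(\<Sum>D | D \<subseteq> U \<and> card D < h. \<Prod>i\<in>D. p i) \<le> exp 1 * Q ^ (h - 1)"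
proof -
  have scale: "(\<Prod>i\<in>D. p i) \<le> Q ^ (h - 1) * (\<Prod>i\<in>D. p i / Q)" if "D \<subseteq> U" "card D < h" for D
  proof -
    have "finite D" using that U finite_subset by blast
    have "1 \<le> Q ^ (h - 1) / Q ^ card D"
      using that Q by (simp add: power_increasing)
    moreover have "0 \<le> (\<Prod>i\<in>D. p i)" using that p by (auto intro: prod_nonneg)
    ultimately have "1 * (\<Prod>i\<in>D. p i) \<le> Q ^ (h - 1) / Q ^ card D * (\<Prod>i\<in>D. p i)"
      by (rule mult_right_mono)
    also have "\<dots> = Q ^ (h - 1) * (\<Prod>i\<in>D. p i / Q)"
      using \<open>finite D\<close> by (simp add: prod_dividef)
    finally show ?thesis by simp
  qed
  have "(\<Sum>D | D \<subseteq> U \<and> card D < h. \<Prod>i\<in>D. p i) \<le> (\<Sum>D | D \<subseteq> U \<and> card D < h. Q ^ (h - 1) * (\<Prod>i\<in>D. p i / Q))"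
    using scale by (intro sum_mono) auto
  also have "\<dots> \<le> (\<Sum>D\<in>Pow U. Q ^ (h - 1) * (\<Prod>i\<in>D. p i / Q))"
    using U p Q by (intro sum_mono2) (auto intro!: mult_nonneg_nonneg prod_nonneg divide_nonneg_nonneg)
  also have "\<dots> = Q ^ (h - 1) * (\<Prod>i\<in>U. p i / Q + 1)"
    by (simp add: prod_add[OF U] sum_distrib_left)
  also have "(\<Prod>i\<in>U. p i / Q + 1) \<le> (\<Prod>i\<in>U. exp (p i / Q))"
    using p Q by (intro prod_mono) (auto simp: add.commute[of _ 1])
  also have "\<dots> = exp ((\<Sum>i\<in>U. p i) / Q)" by (simp add: exp_sum[OF U] sum_divide_distrib)
  also have "\<dots> \<le> exp 1" using Q by simp
  finally show ?thesis using Q by (simp add: mult.commute mult_left_mono)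
qed

lemma sum_small_supports_le:
  fixes p :: "nat \<Rightarrow> real"
  assumes b: "\<forall>i\<in>{1..h}. b i > 0" and p: "\<And>k. 1 \<le> k \<Longrightarrow> k \<le> N \<Longrightarrow> 0 \<le> p k"
    and Q: "(\<Sum>k=1..N. p k) \<le> Q" "1 \<le> Q"
  shows "(\<Sum>n=1..N. \<Sum>D | D \<in> rep_supports b h n \<and> card D < h. \<Prod>i\<in>D. p i)
      \<le> real ((h + 1) ^ h) * exp 1 * Q ^ (h - 1)"
proof -
  define S where "S = {D. D \<subseteq> {1..N} \<and> card D < h}"
  have "finite S" unfolding S_def by (rule finite_subset[of _ "Pow {1..N}"]) auto
  have nonneg: "0 \<le> (\<Prod>i\<in>D. p i)" if "D \<in> S" for D
    using that p unfolding S_def by (intro prod_nonneg) auto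
  have supports: "{D. D \<in> rep_supports b h n \<and> card D < h} = {D \<in> S. D \<in> rep_supports b h n}"
    if "n \<in> {1..N}" for n
    using rep_supports_subset[OF b] that unfolding S_def by fastforce
  have "(\<Sum>n=1..N. \<Sum>D | D \<in> rep_supports b h n \<and> card D < h. \<Prod>i\<in>D. p i)
      = (\<Sum>n=1..N. \<Sum>D\<in>S. if D \<in> rep_supports b h n then \<Prod>i\<in>D. p i else 0)"
  proof (rule sum.cong[OF refl])
    fix n assume "n \<in> {1..N}"
    show "(\<Sum>D | D \<in> rep_supports b h n \<and> card D < h. \<Prod>i\<in>D. p i)
        = (\<Sum>D\<in>S. if D \<in> rep_supports b h n then \<Prod>i\<in>D. p i else 0)"
      unfolding supports[OF \<open>n \<in> {1..N}\<close>] using \<open>finite S\<close> by (rule sum.inter_filter)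
  qed
  also have "\<dots> = (\<Sum>D\<in>S. real (card {n\<in>{1..N}. D \<in> rep_supports b h n}) * (\<Prod>i\<in>D. p i))"
  proof (subst sum.swap, rule sum.cong[OF refl])
    fix D
    have "(\<Sum>n=1..N. if D \<in> rep_supports b h n then \<Prod>i\<in>D. p i else 0)
        = (\<Sum>n\<in>{n\<in>{1..N}. D \<in> rep_supports b h n}. \<Prod>i\<in>D. p i)"
      by (rule sum.inter_filter[symmetric]) simp
    then show "(\<Sum>n=1..N. if D \<in> rep_supports b h n then \<Prod>i\<in>D. p i else 0)
        = real (card {n\<in>{1..N}. D \<in> rep_supports b h n}) * (\<Prod>i\<in>D. p i)"
      by simp
  qed
  also have "\<dots> \<le> (\<Sum>D\<in>S. real ((h + 1) ^ h) * (\<Prod>i\<in>D. p i))"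
  proof (rule sum_mono)
    fix D assume "D \<in> S"
    have "card {n\<in>{1..N}. D \<in> rep_supports b h n} \<le> (card D + 1) ^ h"
      by (rule card_rep_supports_index)
    also have "\<dots> \<le> (h + 1) ^ h" using \<open>D \<in> S\<close> unfolding S_def by (intro power_mono) auto
    finally have "real (card {n\<in>{1..N}. D \<in> rep_supports b h n}) \<le> real ((h + 1) ^ h)"
      by (simp only: of_nat_le_iff)
    then show "real (card {n\<in>{1..N}. D \<in> rep_supports b h n}) * (\<Prod>i\<in>D. p i)
        \<le> real ((h + 1) ^ h) * (\<Prod>i\<in>D. p i)"
      using nonneg[OF \<open>D \<in> S\<close>] by (rule mult_right_mono)
  qed
  also have "\<dots> \<le> real ((h + 1) ^ h) * (exp 1 * Q ^ (h - 1))"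
    unfolding sum_distrib_left[symmetric] S_def using p Q
    by (intro mult_left_mono sum_prod_small_subsets_le) auto
  finally show ?thesis by (simp add: mult.assoc)
qed

lemma powr_ln_bound_le:
  fixes a c :: real
  assumes k: "1 \<le> k" "k \<le> N" and c: "0 \<le> c" and a: "0 < a"
  shows "c * (real k * ln (real k)) powr a / real k \<le> c * ln (real N) powr a * real k powr (a - 1)"
proof -
  have "0 \<le> ln (real k)" "ln (real k) \<le> ln (real N)" using k by auto
  have "c * (real k * ln (real k)) powr a / real k = c * ln (real k) powr a * real k powr (a - 1)"
    using k \<open>0 \<le> ln (real k)\<close> by (simp add: powr_mult powr_diff)
  also have "\<dots> \<le> c * ln (real N) powr a * real k powr (a - 1)"
    using c a \<open>0 \<le> ln (real k)\<close> \<open>ln (real k) \<le> ln (real N)\<close>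
    by (intro mult_right_mono mult_left_mono powr_mono2) auto
  finally show ?thesis .
qed

lemma sum_rep_supports_split:
  assumes "\<forall>i\<in>{1..h}. b i > 0"
  shows "(\<Sum>D\<in>rep_supports b h n. f D)
      = (\<Sum>D | D \<in> rep_supports b h n \<and> card D = h. f D) + (\<Sum>D | D \<in> rep_supports b h n \<and> card D < h. f D)"
proof -
  have "rep_supports b h n = {D. D \<in> rep_supports b h n \<and> card D = h} \<union> {D. D \<in> rep_supports b h n \<and> card D < h}"
    using card_rep_supports_le[of _ b h n] by fastforce
  then show ?thesis
    using finite_rep_supports[OF assms] by (subst sum.union_disjoint[symmetric]) auto
qed

lemma sum_rep_supports_le:
  fixes p :: "nat \<Rightarrow> real" and c :: real
  assumes b: "\<forall>i\<in>{1..h}. b i > 0" and h: "h \<ge> 1" and c: "0 \<le> c"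
    and p: "\<And>k. 1 \<le> k \<Longrightarrow> 0 \<le> p k \<and> p k \<le> c * (real k * ln (real k)) powr (1 / real h) / real k"
    and N: "N \<ge> 3"
  shows "(\<Sum>n=1..N. \<Sum>D\<in>rep_supports b h n. \<Prod>i\<in>D. p i)
    \<le> c ^ h * Gamma (1 / real h) ^ h / real (\<Prod>i=1..h. b i) powr (1 / real h) * (real N * ln (real N))
      + real ((h + 1) ^ h) * exp 1 * (1 + c * real h) ^ (h - 1) * (real N * ln (real N)) powr (1 - 1 / real h)"
proof -
  define a where "a = 1 / real h"
  define z where "z = real N * ln (real N)"
  have a: "0 < a" "a \<le> 1" "real h * a = 1" using h by (auto simp: a_def)
  have "ln 3 \<le> ln (real N)" using N by (subst ln_le_cancel_iff) auto
  then have L: "1 \<le> ln (real N)" using ln3_gt_1 by linarith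
  then have z: "1 \<le> z" "z powr a = ln (real N) powr a * real N powr a"
    using N by (auto simp: z_def powr_mult intro: order.trans[OF _ mult_mono[of 1 _ 1]])
  have pk: "0 \<le> p k \<and> p k \<le> c * ln (real N) powr a * real k powr (a - 1)" if "1 \<le> k" "k \<le> N" for k
    using p[OF that(1)] powr_ln_bound_le[OF that c a(1)] by (simp add: a_def)
  have "(c * ln (real N) powr a) ^ h = c ^ h * ln (real N)"
    using L a(3) by (simp add: power_mult_distrib powr_power)
  then have full: "(\<Sum>n=1..N. \<Sum>D | D \<in> rep_supports b h n \<and> card D = h. \<Prod>i\<in>D. p i)
      \<le> c ^ h * Gamma a ^ h / real (\<Prod>i=1..h. b i) powr a * z"
    using sum_full_supports_le_inverse[where N=N, OF b h _ pk[unfolded a_def]] c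
    by (simp add: a_def z_def ac_simps)
  have "(\<Sum>k=1..N. p k) \<le> c * ln (real N) powr a * (\<Sum>k=1..nat \<lfloor>real N\<rfloor>. real k powr (a - 1))"
    unfolding sum_distrib_left using pk by (auto intro: sum_mono)
  also have "\<dots> \<le> c * ln (real N) powr a * (real N powr a / a)"
    using c sum_powr_le[OF a(1,2), of "real N"] by (intro mult_left_mono) auto
  also have "\<dots> \<le> (1 + c * real h) * z powr a"
    using z a c by (simp add: a_def field_simps)
  finally have sum_p: "(\<Sum>k=1..N. p k) \<le> (1 + c * real h) * z powr a" .
  have "1 * 1 \<le> (1 + c * real h) * z powr a"
    using z(1) a(1) c by (intro mult_mono ge_one_powr_ge_zero) auto
  then have small: "(\<Sum>n=1..N. \<Sum>D | D \<in> rep_supports b h n \<and> card D < h. \<Prod>i\<in>D. p i)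
      \<le> real ((h + 1) ^ h) * exp 1 * ((1 + c * real h) * z powr a) ^ (h - 1)"
    using pk by (intro sum_small_supports_le[OF b _ sum_p]) auto
  have "((1 + c * real h) * z powr a) ^ (h - 1) = (1 + c * real h) ^ (h - 1) * z powr (1 - a)"
  proof -
    have "real (h - 1) * a = 1 - a" using a(3) h by (simp add: of_nat_diff algebra_simps)
    then have "(z powr a) ^ (h - 1) = z powr (1 - a)" using z(1) by (simp add: powr_power)
    then show ?thesis by (simp add: power_mult_distrib)
  qed
  then show ?thesis
    using full small unfolding sum_rep_supports_split[OF b] sum.distrib
    by (simp add: a_def z_def ac_simps)
qed

section \<open>Divergence\<close>

lemma exp_sum_le_prod_one_minus:
  fixes x :: "'a \<Rightarrow> real"
  assumes F: "finite F" and \<delta>: "0 < \<delta>" "\<delta> \<le> 1" and x: "\<And>D. D \<in> F \<Longrightarrow> 0 \<le> x D \<and> x D \<le> \<delta> / 2"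
  shows "exp (- (1 + \<delta>) * sum x F) \<le> (\<Prod>D\<in>F. 1 - x D)"
proof -
  have one: "exp (- (1 + \<delta>) * y) \<le> 1 - y" if "0 \<le> y" "y \<le> \<delta> / 2" for y
  proof -
    have "- y - 2 * y\<^sup>2 \<le> ln (1 - y)" using that \<delta> by (intro ln_one_minus_pos_lower_bound) auto
    moreover have "2 * y * y \<le> \<delta> * y" using that by (intro mult_right_mono) auto
    ultimately have "- (1 + \<delta>) * y \<le> ln (1 - y)" by (simp add: power2_eq_square algebra_simps)
    then have "exp (- (1 + \<delta>) * y) \<le> exp (ln (1 - y))" by simp
    also have "\<dots> = 1 - y" using that \<delta> by simp
    finally show ?thesis .
  qed
  have "exp (- (1 + \<delta>) * sum x F) = (\<Prod>D\<in>F. exp (- (1 + \<delta>) * x D))"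
    by (simp add: sum_distrib_left exp_sum[OF F])
  also have "\<dots> \<le> (\<Prod>D\<in>F. 1 - x D)"
    using x one by (intro prod_mono) auto
  finally show ?thesis .
qed

lemma emeasure_rep_eq_0_ge_exp:
  fixes p :: "nat \<Rightarrow> real"
  assumes b: "\<forall>i\<in>{1..h}. b i > 0" and h: "h \<ge> 1" and \<delta>: "0 < \<delta>" "\<delta> \<le> 1"
    and p: "\<And>k. 1 \<le> k \<Longrightarrow> 0 \<le> p k \<and> p k \<le> 1"
    and p_small: "eventually (\<lambda>k. p k \<le> \<delta> / 2) sequentially"
  shows "eventually (\<lambda>n. ennreal (exp (- (1 + \<delta>) * (\<Sum>D\<in>rep_supports b h n. \<Prod>i\<in>D. p i)))
      \<le> emeasure (bern_space p) {\<omega> \<in> space (bern_space p). rep b (rand_set \<omega>) h n = 0}) sequentially"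
proof -
  obtain M where M: "\<And>k. k \<ge> M \<Longrightarrow> p k \<le> \<delta> / 2"
    using p_small by (auto simp: eventually_sequentially)
  define X where "X = Max (b ` {1..h}) * h"
  have "ennreal (exp (- (1 + \<delta>) * (\<Sum>D\<in>rep_supports b h n. \<Prod>i\<in>D. p i)))
      \<le> emeasure (bern_space p) {\<omega> \<in> space (bern_space p). rep b (rand_set \<omega>) h n = 0}"
    if n: "n \<ge> M * X + 1" for n
  proof -
    have small: "0 \<le> (\<Prod>i\<in>D. p i) \<and> (\<Prod>i\<in>D. p i) \<le> \<delta> / 2" if D: "D \<in> rep_supports b h n" for D
    proof -
      have Dsub: "D \<subseteq> {1..n}" by (rule rep_supports_subset[OF b D])
      then have "finite D" by (rule finite_subset) simp
      obtain k where k: "k \<in> D" "n \<le> k * X"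
        using rep_supports_large_elem[OF b D] n unfolding X_def by auto
      then have "M * X < k * X" using n by linarith
      then have "M \<le> k" by (simp add: mult_less_cancel2)
      have "(\<Prod>i\<in>D. p i) = p k * (\<Prod>i\<in>D - {k}. p i)"
        using k(1) \<open>finite D\<close> by (simp add: prod.remove)
      also have "\<dots> \<le> p k"
        using p Dsub k(1) by (intro mult_left_le prod_le_1) auto
      finally show ?thesis using M[OF \<open>M \<le> k\<close>] p Dsub by (auto intro!: prod_nonneg)
    qed
    have "exp (- (1 + \<delta>) * (\<Sum>D\<in>rep_supports b h n. \<Prod>i\<in>D. p i)) \<le> (\<Prod>D\<in>rep_supports b h n. 1 - (\<Prod>i\<in>D. p i))"
      using small by (intro exp_sum_le_prod_one_minus finite_rep_supports[OF b] \<delta>) auto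
    then show ?thesis
      using p by (intro order.trans[OF _ emeasure_rep_eq_0_ge[OF b]] ennreal_leI) auto
  qed
  then show ?thesis unfolding eventually_sequentially by blast
qed

lemma not_summable_exp_neg:
  fixes S :: "nat \<Rightarrow> real" and \<theta> :: real
  assumes \<theta>: "\<theta> < 1"
    and S: "eventually (\<lambda>N. (\<Sum>n=1..N. S n) \<le> \<theta> * (real N * ln (real N))) sequentially"
  shows "\<not> summable (\<lambda>n. exp (- S n))"
proof
  assume summable: "summable (\<lambda>n. exp (- S n))"
  have "eventually (\<lambda>N. real N powr (1 - \<theta>) \<le> (\<Sum>n=1..N. exp (- S n))) sequentially"
    using S eventually_ge_at_top[of 1]
  proof eventually_elim
    case (elim N)
    have N: "real N > 0" using elim by simp
    have "exp (\<Sum>n=1..N. (1 / real N) *\<^sub>R (- S n)) \<le> (\<Sum>n=1..N. (1 / real N) * exp (- S n))"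
      using elim by (intro convex_on_sum[OF _ _ exp_convex]) auto
    then have jensen: "exp (- (\<Sum>n=1..N. S n) / real N) \<le> (\<Sum>n=1..N. exp (- S n)) / real N"
      by (simp add: sum_negf sum_divide_distrib[symmetric])
    have "(\<Sum>n=1..N. S n) / real N \<le> \<theta> * ln (real N)"
      using elim(1) N by (simp add: pos_divide_le_eq mult.commute mult.left_commute)
    have "real N powr (1 - \<theta>) = real N * exp (- (\<theta> * ln (real N)))"
      using N by (simp add: powr_def exp_diff exp_minus field_simps)
    also have "\<dots> \<le> real N * exp (- (\<Sum>n=1..N. S n) / real N)"
      using \<open>(\<Sum>n=1..N. S n) / real N \<le> \<theta> * ln (real N)\<close> N by (intro mult_left_mono) auto
    also have "\<dots> \<le> (\<Sum>n=1..N. exp (- S n))"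
      using jensen N by (simp add: field_simps)
    finally show ?case .
  qed
  moreover have "filterlim (\<lambda>N. real N powr (1 - \<theta>)) at_top sequentially"
    using \<theta> by real_asymp
  then have "eventually (\<lambda>N. real N powr (1 - \<theta>) > suminf (\<lambda>n. exp (- S n))) sequentially"
    by (simp add: filterlim_at_top_dense)
  ultimately have "eventually (\<lambda>N. (\<Sum>n=1..N. exp (- S n)) > suminf (\<lambda>n. exp (- S n))) sequentially"
    by eventually_elim simp
  then obtain N where "(\<Sum>n=1..N. exp (- S n)) > suminf (\<lambda>n. exp (- S n))"
    unfolding eventually_sequentially by blast
  moreover have "(\<Sum>n=1..N. exp (- S n)) \<le> suminf (\<lambda>n. exp (- S n))"
    using summable by (intro sum_le_suminf) auto
  ultimately show False by simp
qed

lemma suminf_eq_top_if_ge_not_summable: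
  fixes f :: "nat \<Rightarrow> ennreal" and g :: "nat \<Rightarrow> real"
  assumes g: "\<not> summable g" "\<And>n. 0 \<le> g n" and ge: "eventually (\<lambda>n. ennreal (g n) \<le> f n) sequentially"
  shows "(\<Sum>n. f n) = \<infinity>"
proof -
  obtain N where N: "\<And>n. n \<ge> N \<Longrightarrow> ennreal (g n) \<le> f n"
    using ge by (auto simp: eventually_sequentially)
  define g' where "g' n = (if n \<ge> N then g n else 0)" for n
  have "eventually (\<lambda>n. g' n = g n) sequentially"
    unfolding g'_def eventually_sequentially by auto
  then have "\<not> summable g'" using g(1) summable_cong by blast
  then have "(\<Sum>n. ennreal (g' n)) = top"
    by (rule summable_iff_suminf_neq_top[rotated]) (simp add: g'_def g(2))
  moreover have "(\<Sum>n. ennreal (g' n)) \<le> (\<Sum>n. f n)"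
    using N by (intro suminf_le) (auto simp: g'_def)
  ultimately show ?thesis by (simp add: top_unique)
qed

lemma suminf_Suc_eq_top_if_exp_neg_le:
  fixes S :: "nat \<Rightarrow> real" and f :: "nat \<Rightarrow> ennreal" and \<theta> :: real
  assumes \<theta>: "\<theta> < 1"
    and upper: "eventually (\<lambda>N. (\<Sum>n=1..N. S n) \<le> \<theta> * (real N * ln (real N))) sequentially"
    and lower: "eventually (\<lambda>n. ennreal (exp (- S n)) \<le> f n) sequentially"
  shows "(\<Sum>n. f (Suc n)) = \<infinity>"
proof (rule suminf_eq_top_if_ge_not_summable)
  show "\<not> summable (\<lambda>n. exp (- S (Suc n)))"
    using not_summable_exp_neg[OF \<theta> upper] summable_Suc_iff[of "\<lambda>n. exp (- S n)"] by simp
  show "eventually (\<lambda>n. ennreal (exp (- S (Suc n))) \<le> f (Suc n)) sequentially"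
    using lower unfolding eventually_sequentially by (meson le_SucI)
qed simp

lemma critical_constant_pow:
  fixes h :: nat and \<epsilon> P :: real
  assumes h: "h \<ge> 1" and \<epsilon>: "\<epsilon> < 1" and P: "P > 0"
  shows "((1 - \<epsilon>) powr (1 / real h) * P powr (1 / real (h^2)) / Gamma (1 / real h)) ^ h
           * Gamma (1 / real h) ^ h / P powr (1 / real h) = 1 - \<epsilon>"
proof -
  have "Gamma (1 / real h) > 0" using h by (intro Gamma_real_pos) auto
  moreover have "((1 - \<epsilon>) powr (1 / real h)) ^ h = 1 - \<epsilon>"
    using h \<epsilon> by (simp add: powr_power)
  moreover have "(P powr (1 / real (h^2))) ^ h = P powr (1 / real h)"
    using h P by (simp add: powr_power power2_eq_square)
  ultimately show ?thesis using P by (simp add: power_mult_distrib power_divide)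
qed

lemma eventually_powr_le_mult:
  fixes C \<delta> a :: real
  assumes "0 < a" "0 < \<delta>"
  shows "eventually (\<lambda>N. C * (real N * ln (real N)) powr (1 - a) \<le> \<delta> * (real N * ln (real N))) sequentially"
proof -
  have "filterlim (\<lambda>N. real N * ln (real N)) at_top sequentially" by real_asymp
  then have "((\<lambda>N. C * (real N * ln (real N)) powr (- a)) \<longlongrightarrow> C * 0) sequentially"
    using assms by (intro tendsto_mult tendsto_const tendsto_neg_powr) auto
  then have "eventually (\<lambda>N. C * (real N * ln (real N)) powr (- a) < \<delta>) sequentially"
    using assms by (intro order_tendstoD) auto
  moreover have "eventually (\<lambda>N. real N * ln (real N) > 0) sequentially"
    using \<open>filterlim _ at_top sequentially\<close> by (simp add: filterlim_at_top_dense)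
  ultimately show ?thesis
  proof eventually_elim
    case (elim N)
    have "C * (real N * ln (real N)) powr (1 - a)
        = (real N * ln (real N)) * (C * (real N * ln (real N)) powr (- a))"
      using elim(2) by (simp add: powr_diff powr_minus field_simps)
    also have "\<dots> \<le> (real N * ln (real N)) * \<delta>"
      using elim by (intro mult_left_mono) auto
    finally show ?case by (simp add: mult.commute)
  qed
qed

lemma eventually_le_if_powr_ln_bound:
  fixes p :: "nat \<Rightarrow> real" and a c \<delta> :: real
  assumes p: "\<And>k. 1 \<le> k \<Longrightarrow> p k \<le> c * (real k * ln (real k)) powr a / real k"
    and a: "0 < a" "a < 1" and \<delta>: "0 < \<delta>"
  shows "eventually (\<lambda>k. p k \<le> \<delta>) sequentially"
proof -
  have "((\<lambda>k. (real k * ln (real k)) powr a / real k) \<longlongrightarrow> 0) sequentially"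
    using a by real_asymp
  then have "((\<lambda>k. c * ((real k * ln (real k)) powr a / real k)) \<longlongrightarrow> 0) sequentially"
    by (rule tendsto_mult_right_zero)
  then have "eventually (\<lambda>k. c * ((real k * ln (real k)) powr a / real k) < \<delta>) sequentially"
    using \<delta> by (rule order_tendstoD)
  then show ?thesis
    using eventually_ge_at_top[of 1] by eventually_elim (use p in fastforce)
qed

lemma eventually_sum_rep_supports_le:
  fixes p :: "nat \<Rightarrow> real" and c \<delta> :: real
  assumes b: "\<forall>i\<in>{1..h}. b i > 0" and h: "h \<ge> 1" and c: "0 \<le> c" and \<delta>: "0 < \<delta>"
    and p: "\<And>k. 1 \<le> k \<Longrightarrow> 0 \<le> p k \<and> p k \<le> c * (real k * ln (real k)) powr (1 / real h) / real k"
  shows "eventually (\<lambda>N. (\<Sum>n=1..N. \<Sum>D\<in>rep_supports b h n. \<Prod>i\<in>D. p i)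
      \<le> (c ^ h * Gamma (1 / real h) ^ h / real (\<Prod>i=1..h. b i) powr (1 / real h) + \<delta>)
         * (real N * ln (real N))) sequentially"
proof -
  have "0 < 1 / real h" using h by simp
  from eventually_ge_at_top[of "3::nat"]
    eventually_powr_le_mult[OF this \<delta>, of "real ((h + 1) ^ h) * exp 1 * (1 + c * real h) ^ (h - 1)"]
  show ?thesis
  proof eventually_elim
    case (elim N)
    then show ?case
      using sum_rep_supports_le[OF b h c p elim(1)] by (simp add: algebra_simps)
  qed
qed

theorem mainTheorem14:
  fixes h :: nat and b :: "nat \<Rightarrow> nat" and \<epsilon> c :: real and p :: "nat \<Rightarrow> real"
  assumes "h \<ge> 2"
    and "\<forall>i\<in>{1..h}. b i > 0"
    and "Gcd (b ` {1..h}) = 1"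
    and "0 < \<epsilon>" and "\<epsilon> < 1/2"
    and "c = (1 - \<epsilon>) powr (1 / real h) * (real (\<Prod>i=1..h. b i)) powr (1 / real (h^2))
             / Gamma (1 / real h)"
    and "\<forall>n\<ge>1. p n = min (c * (real n * ln (real n)) powr (1 / real h) / real n) 1"
  shows "(\<Sum>n. emeasure (bern_space p)
            {\<omega> \<in> space (bern_space p). rep b (rand_set \<omega>) h (Suc n) = 0}) = \<infinity>"
proof -
  note h = assms(1) and b = assms(2) and \<epsilon> = assms(4,5) and c_def = assms(6) and p_def = assms(7)
  define \<delta> where "\<delta> = \<epsilon> / 8"
  define S where "S n = (1 + \<delta>) * (\<Sum>D\<in>rep_supports b h n. \<Prod>i\<in>D. p i)" for n
  have \<delta>: "0 < \<delta>" "\<delta> \<le> 1" using \<epsilon> by (auto simp: \<delta>_def)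
  have "(1 + \<delta>) * (1 - \<epsilon> + \<delta>) = 1 - \<delta> * (6 + 7 * \<delta>)"
    by (simp add: \<delta>_def algebra_simps)
  then have \<theta>: "(1 + \<delta>) * (1 - \<epsilon> + \<delta>) < 1"
    using \<delta> by (simp add: mult_pos_pos)
  have Pb: "real (\<Prod>i=1..h. b i) > 0"
    unfolding of_nat_0_less_iff using b by (intro prod_pos) auto
  have c: "c > 0" unfolding c_def using \<epsilon> Pb h b by (intro divide_pos_pos mult_pos_pos Gamma_real_pos) auto
  have p: "0 \<le> p k \<and> p k \<le> c * (real k * ln (real k)) powr (1 / real h) / real k" "p k \<le> 1"
    if "1 \<le> k" for k
    using p_def c that by auto
  have "c ^ h * Gamma (1 / real h) ^ h / real (\<Prod>i=1..h. b i) powr (1 / real h) = 1 - \<epsilon>"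
    using critical_constant_pow[OF _ _ Pb, of h \<epsilon>] h \<epsilon> unfolding c_def by simp
  then have "eventually (\<lambda>N. (\<Sum>n=1..N. \<Sum>D\<in>rep_supports b h n. \<Prod>i\<in>D. p i)
      \<le> (1 - \<epsilon> + \<delta>) * (real N * ln (real N))) sequentially"
    using eventually_sum_rep_supports_le[OF b _ _ \<delta>(1) p(1)] h c by simp
  then have "eventually (\<lambda>N. (\<Sum>n=1..N. S n) \<le> (1 + \<delta>) * (1 - \<epsilon> + \<delta>) * (real N * ln (real N))) sequentially"
    by eventually_elim (use \<delta> in \<open>simp add: S_def sum_distrib_left[symmetric] mult.assoc mult_left_mono\<close>)
  moreover have "eventually (\<lambda>k. p k \<le> \<delta> / 2) sequentially"
    using h \<delta> p by (intro eventually_le_if_powr_ln_bound[of p c "1 / real h"]) auto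
  then have "eventually (\<lambda>n. ennreal (exp (- S n))
      \<le> emeasure (bern_space p) {\<omega> \<in> space (bern_space p). rep b (rand_set \<omega>) h n = 0}) sequentially"
    unfolding S_def minus_mult_left using h p by (intro emeasure_rep_eq_0_ge_exp[OF b _ \<delta>]) auto
  ultimately show ?thesis
    by (rule suminf_Suc_eq_top_if_exp_neg_le[OF \<theta>])
qed

end
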